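(* In the acoustic setting, suppose $A<0$ near $\rho_1\in(\rho_-,\rho_+)$, $B(\rho_1)>0$, and $A(\rho)+1=C(\rho)(\rho-\rho_1)^2$ near $\rho_1$ with $C(\rho)>0$ (a double root of $A=-1$). Then the circle $\rho=\rho_1$ is a horizon of the $(+)$ family (i.e. $\rho^+(t)\equiv\rho_1$ is a solution, with $d\varphi^+/dt=B(\rho_1)/\rho_1\neq 0$), and $d\rho^+/dt>0$ for all $\rho\neq\rho_1$ in a neighborhood of $\rho_1$; consequently $(+)$ trajectories starting slightly below $\rho_1$ satisfy $\rho^+(t)\to\rho_1$ as $t\to+\infty$, and those starting slightly above satisfy $\rho^+(t)\to\rho_1$ as $t\to-\infty$.
   Context: Acoustic metric in the plane with polar coordinates $(\rho,\varphi)$: Hamiltonian $H=(\tau+A\xi_\rho+B\xi_\varphi/\rho)^2-\xi_\rho^2-(\xi_\varphi/\rho)^2$, $A=A(\rho)$, $B=B(\rho)$ smooth. The ergoregion is the annulus $\rho_-<\rho<\rho_+$ where $A^2+B^2>1$. Zero-energy null geodesics are the null bicharacteristics with $\tau=0$ parametrized by $t$; the sign in $\xi_\rho=\frac{-AB\pm\sqrt{A^2+B^2-1}}{A^2-1}\,\xi_\varphi/\rho$ defines the $(\pm)$ family. With $s=\sqrt{A^2+B^2-1}$, the equations of motion in the ergoregion are $$\frac{d\rho^\pm}{dt}=\frac{A(A^2+B^2-1)\pm Bs}{A^2+B^2},\qquad \frac{d\varphi^\pm}{dt}=\frac{s\,(Bs\mp A)}{\rho\,(A^2+B^2)}.$$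 A horizon of the $(\pm)$ family is a circle $\{\rho=c\}$ in the ergoregion which is a closed trajectory of that family. *)

theory Defs
  imports "HOL-Analysis.Analysis"
begin

definition smooth_on :: "real set \<Rightarrow> (real \<Rightarrow> real) \<Rightarrow> bool" where
  "smooth_on S f \<longleftrightarrow> (\<forall>n. \<forall>x\<in>S. ((deriv ^^ n) f) differentiable (at x))"

definition sfun :: "(real \<Rightarrow> real) \<Rightarrow> (real \<Rightarrow> real) \<Rightarrow> real \<Rightarrow> real" where
  "sfun A B r = sqrt ((A r)\<^sup>2 + (B r)\<^sup>2 - 1)"

text \<open>Right-hand sides of the equations of motion of the (+) family in the ergoregion.\<close>
definition vrho_plus :: "(real \<Rightarrow> real) \<Rightarrow> (real \<Rightarrow> real) \<Rightarrow> real \<Rightarrow> real" where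
  "vrho_plus A B r =
     (A r * ((A r)\<^sup>2 + (B r)\<^sup>2 - 1) + B r * sfun A B r) / ((A r)\<^sup>2 + (B r)\<^sup>2)"

definition vphi_plus :: "(real \<Rightarrow> real) \<Rightarrow> (real \<Rightarrow> real) \<Rightarrow> real \<Rightarrow> real" where
  "vphi_plus A B r =
     sfun A B r * (B r * sfun A B r - A r) / (r * ((A r)\<^sup>2 + (B r)\<^sup>2))"

text \<open>(rho, phi) is a (+) zero-energy null geodesic on the parameter set I,
  staying in the ergoregion annulus rm < rho < rp.\<close>
definition plus_trajectory ::
  "(real \<Rightarrow> real) \<Rightarrow> (real \<Rightarrow> real) \<Rightarrow> real \<Rightarrow> real \<Rightarrow> real set
     \<Rightarrow> (real \<Rightarrow> real) \<Rightarrow> (real \<Rightarrow> real) \<Rightarrow> bool" where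
  "plus_trajectory A B rm rp I rho phi \<longleftrightarrow>
     (\<forall>t\<in>I. rm < rho t \<and> rho t < rp \<and>
        (rho has_real_derivative vrho_plus A B (rho t)) (at t within I) \<and>
        (phi has_real_derivative vphi_plus A B (rho t)) (at t within I))"

definition horizon_plus ::
  "(real \<Rightarrow> real) \<Rightarrow> (real \<Rightarrow> real) \<Rightarrow> real \<Rightarrow> real \<Rightarrow> real \<Rightarrow> bool" where
  "horizon_plus A B rm rp c \<longleftrightarrow> rm < c \<and> c < rp \<and>
     (\<exists>phi. plus_trajectory A B rm rp UNIV (\<lambda>t. c) phi \<and>
        (\<lambda>t. (c * cos (phi t), c * sin (phi t))) ` UNIV = {p :: real \<times> real. norm p = c})"

end

theory Submission
  imports Defs
begin

text \<open>At \<open>\<rho>\<^sub>1\<close> we have \<open>A = -1\<close>, hence \<open>s = B\<close>, so the radial speed vanishes and the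
  angular speed is \<open>B(\<rho>\<^sub>1)/\<rho>\<^sub>1 \<noteq> 0\<close>: the circle is a closed trajectory. Rationalizing,
  the radial speed equals \<open>s (1 - A\<^sup>2) / (B - A s)\<close>; near \<open>\<rho>\<^sub>1\<close> we have \<open>-1 < A < 0\<close>
  off \<open>\<rho>\<^sub>1\<close> (double root) and \<open>s \<le> B\<close>, so it is positive and at most
  \<open>2 (1 + A) = O(|\<rho> - \<rho>\<^sub>1|)\<close>. The radial equation is thus an autonomous ODE
  \<open>\<rho>' = v(\<rho>)\<close> with \<open>v > 0\<close> vanishing at most linearly at \<open>\<rho>\<^sub>1\<close>. Below \<open>\<rho>\<^sub>1\<close> a
  solution increases, cannot reach \<open>\<rho>\<^sub>1\<close> in finite time (Gronwall; equivalently
  \<open>\<integral> d\<rho> / v\<close> diverges, which also gives global existence by separation of variables), and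
  converges to \<open>\<rho>\<^sub>1\<close>. Above \<open>\<rho>\<^sub>1\<close> the substitution \<open>\<rho> \<mapsto> 2\<rho>\<^sub>1 - \<rho>\<close>, \<open>t \<mapsto> -t\<close>
  reduces to the same situation backwards in time.\<close>

section \<open>Scalar autonomous ODEs on a half-line\<close>

lemma DERIV_nonpos_imp_decreasing_halfline:
  fixes u u' :: "real \<Rightarrow> real"
  assumes der: "\<And>t. 0 \<le> t \<Longrightarrow> (u has_real_derivative u' t) (at t within {0..})"
    and st: "0 \<le> s" "s \<le> t" and nonpos: "\<And>x. s < x \<Longrightarrow> x < t \<Longrightarrow> u' x \<le> 0"
  shows "u t \<le> u s"
proof (rule DERIV_nonpos_imp_decreasing_open[OF st(2)])
  fix x assume x: "s < x" "x < t"
  have "at x within {0..} = at x"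
    using x st by (intro at_within_interior) auto
  then show "\<exists>y. (u has_real_derivative y) (at x) \<and> y \<le> 0"
    using der[of x] nonpos[OF x] x st by auto
next
  have "continuous_on {0..} u"
    using der by (auto simp: continuous_on_eq_continuous_within intro: DERIV_continuous)
  then show "continuous_on {s..t} u"
    by (rule continuous_on_subset) (use st in auto)
qed

lemma gronwall_lower_bound:
  fixes u u' :: "real \<Rightarrow> real"
  assumes der: "\<And>t. 0 \<le> t \<Longrightarrow> (u has_real_derivative u' t) (at t within {0..})"
    and "0 \<le> t" and lower: "\<And>x. 0 < x \<Longrightarrow> x < t \<Longrightarrow> - K * u x \<le> u' x"
  shows "u 0 \<le> u t * exp (K * t)"
proof -
  define g where "g x = - u x * exp (K * x)" for x
  have "g t \<le> g 0"
  proof (rule DERIV_nonpos_imp_decreasing_halfline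
      [where u = g and u' = "\<lambda>x. - (u' x + K * u x) * exp (K * x)"])
    fix x :: real assume "0 \<le> x"
    show "(g has_real_derivative - (u' x + K * u x) * exp (K * x)) (at x within {0..})"
      unfolding g_def using der[OF \<open>0 \<le> x\<close>]
      by (auto intro!: derivative_eq_intros simp: algebra_simps)
  next
    fix x assume "0 < x" "x < t"
    then show "- (u' x + K * u x) * exp (K * x) \<le> 0"
      using lower[of x] by (simp add: mult_nonpos_nonneg)
  qed (use \<open>0 \<le> t\<close> in auto)
  then show ?thesis by (simp add: g_def)
qed

lemma barrier_extends_right:
  fixes u u' :: "real \<Rightarrow> real"
  assumes der: "\<And>t. 0 \<le> t \<Longrightarrow> (u has_real_derivative u' t) (at t within {0..})"
    and nonpos: "\<And>t. 0 \<le> t \<Longrightarrow> 0 < u t \<Longrightarrow> u t < d \<Longrightarrow> u' t \<le> 0"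
    and "0 \<le> s" "0 < u s" "u s < d"
  shows "\<exists>e>0. \<forall>x. s \<le> x \<and> x < s + e \<longrightarrow> 0 < u x \<and> u x \<le> u s"
proof -
  have "continuous (at s within {0..}) u"
    using der[OF \<open>0 \<le> s\<close>] by (rule DERIV_continuous)
  then have lim: "(u \<longlongrightarrow> u s) (at s within {0..})"
    by (simp add: continuous_within)
  have "\<forall>\<^sub>F x in at s within {0..}. 0 < u x \<and> u x < d"
    using order_tendstoD(1)[OF lim] order_tendstoD(2)[OF lim] assms by (intro eventually_conj) auto
  then obtain e where "e > 0"
    and near: "\<And>x. 0 \<le> x \<Longrightarrow> x \<noteq> s \<Longrightarrow> \<bar>x - s\<bar> < e \<Longrightarrow> 0 < u x \<and> u x < d"
    unfolding eventually_at by (auto simp: dist_real_def)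
  have "0 < u x \<and> u x \<le> u s" if "s \<le> x" "x < s + e" for x
  proof -
    have "u x \<le> u s"
      using near nonpos that \<open>0 \<le> s\<close>
      by (intro DERIV_nonpos_imp_decreasing_halfline[OF der]) auto
    then show ?thesis
      using \<open>0 < u s\<close> near[of x] that \<open>0 \<le> s\<close> by (cases "x = s") auto
  qed
  then show ?thesis using \<open>e > 0\<close> by blast
qed

lemma barrier_invariant_halfline:
  fixes u u' :: "real \<Rightarrow> real"
  assumes der: "\<And>t. 0 \<le> t \<Longrightarrow> (u has_real_derivative u' t) (at t within {0..})"
    and u0: "0 < u 0" "u 0 < d"
    and bnd: "\<And>t. 0 \<le> t \<Longrightarrow> 0 < u t \<Longrightarrow> u t < d \<Longrightarrow> - K * u t \<le> u' t \<and> u' t \<le> 0"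
    and "0 \<le> t"
  shows "0 < u t \<and> u t \<le> u 0"
proof (rule ccontr)
  define T where "T = {t. 0 \<le> t \<and> \<not> (0 < u t \<and> u t \<le> u 0)}"
  assume "\<not> (0 < u t \<and> u t \<le> u 0)"
  then have "t \<in> T" using \<open>0 \<le> t\<close> by (simp add: T_def)
  then have T_ne: "T \<noteq> {}" by blast
  have T_bdd: "bdd_below T" by (auto simp: T_def bdd_below_def)
  define ts where "ts = Inf T"
  have ts_lower: "ts \<le> x" if "x \<in> T" for x
    unfolding ts_def using that T_bdd by (rule cInf_lower)
  have "0 \<le> ts" unfolding ts_def using T_ne by (intro cInf_greatest) (auto simp: T_def)
  have before: "0 < u x \<and> u x < d" if "0 \<le> x" "x < ts" for x
    using ts_lower[of x] that u0 by (force simp: T_def)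
  have "u ts \<le> u 0"
    using before bnd \<open>0 \<le> ts\<close>
    by (intro DERIV_nonpos_imp_decreasing_halfline[OF der]) auto
  moreover have "0 < u ts"
  proof -
    have "u 0 \<le> u ts * exp (K * ts)"
      using before bnd \<open>0 \<le> ts\<close> by (intro gronwall_lower_bound[OF der]) auto
    then have "0 < u ts * exp (K * ts)" using u0 by linarith
    then show ?thesis by (simp add: zero_less_mult_iff)
  qed
  ultimately have at_ts: "0 < u ts \<and> u ts \<le> u 0" by simp
  have "\<exists>e>0. \<forall>x. ts \<le> x \<and> x < ts + e \<longrightarrow> 0 < u x \<and> u x \<le> u ts"
    using bnd at_ts u0 \<open>0 \<le> ts\<close> by (intro barrier_extends_right[where d = d, OF der]) auto
  then obtain e where "e > 0" and after: "\<And>x. ts \<le> x \<Longrightarrow> x < ts + e \<Longrightarrow> 0 < u x \<and> u x \<le> u ts"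
    by blast
  have "ts + e \<le> ts"
    unfolding ts_def
  proof (rule cInf_greatest[OF T_ne])
    fix x assume "x \<in> T"
    then show "Inf T + e \<le> x"
      using ts_lower[of x] after[of x] at_ts unfolding ts_def[symmetric] by (force simp: T_def)
  qed
  then show False using \<open>e > 0\<close> by simp
qed

lemma tendsto_zero_if_uniformly_decreasing:
  fixes u u' :: "real \<Rightarrow> real"
  assumes der: "\<And>t. 0 \<le> t \<Longrightarrow> (u has_real_derivative u' t) (at t within {0..})"
    and pos: "\<And>t. 0 \<le> t \<Longrightarrow> 0 < u t"
    and nonpos: "\<And>t. 0 \<le> t \<Longrightarrow> u' t \<le> 0"
    and steep: "\<And>\<epsilon>. 0 < \<epsilon> \<Longrightarrow> \<exists>m>0. \<forall>t\<ge>0. \<epsilon> \<le> u t \<longrightarrow> u' t \<le> - m"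
  shows "(u \<longlongrightarrow> 0) at_top"
proof (rule order_tendstoI)
  fix a :: real assume "a < 0"
  then show "\<forall>\<^sub>F t in at_top. a < u t"
    using pos by (intro eventually_at_top_linorderI[of 0]) (auto intro: less_trans)
next
  fix \<epsilon> :: real assume "0 < \<epsilon>"
  then obtain m where "m > 0" and m: "\<And>t. 0 \<le> t \<Longrightarrow> \<epsilon> \<le> u t \<Longrightarrow> u' t \<le> - m"
    using steep by blast
  have "\<exists>T\<ge>0. u T < \<epsilon>"
  proof (rule ccontr)
    assume "\<not> ?thesis"
    then have above: "\<And>t. 0 \<le> t \<Longrightarrow> \<epsilon> \<le> u t" by (meson not_le)
    define T where "T = u 0 / m + 1"
    have "0 \<le> T" using pos[of 0] \<open>m > 0\<close> by (simp add: T_def)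
    \<comment> \<open>while above \<open>\<epsilon>\<close>, the solution descends at speed at least \<open>m\<close>\<close>
    have "u T + m * T \<le> u 0 + m * 0"
    proof (rule DERIV_nonpos_imp_decreasing_halfline
        [where u = "\<lambda>t. u t + m * t" and u' = "\<lambda>t. u' t + m"])
      fix t :: real assume "0 \<le> t"
      show "((\<lambda>t. u t + m * t) has_real_derivative u' t + m) (at t within {0..})"
        using der[OF \<open>0 \<le> t\<close>] by (auto intro!: derivative_eq_intros)
    next
      fix t assume "0 < t" "t < T"
      then show "u' t + m \<le> 0" using m[of t] above[of t] by simp
    qed (use \<open>0 \<le> T\<close> in auto)
    moreover have "m * T = u 0 + m" using \<open>m > 0\<close> by (simp add: T_def field_simps)
    ultimately show False using pos[OF \<open>0 \<le> T\<close>] \<open>m > 0\<close> by linarith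
  qed
  then obtain T where "T \<ge> 0" "u T < \<epsilon>" by blast
  have "u t < \<epsilon>" if "T \<le> t" for t
    using DERIV_nonpos_imp_decreasing_halfline[OF der \<open>T \<ge> 0\<close> that] nonpos \<open>T \<ge> 0\<close> \<open>u T < \<epsilon>\<close>
    by force
  then show "\<forall>\<^sub>F t in at_top. u t < \<epsilon>"
    by (rule eventually_at_top_linorderI)
qed

lemma autonomous_ode_tendsto_equilibrium:
  fixes v rho :: "real \<Rightarrow> real"
  assumes cont: "\<And>x. c - d < x \<Longrightarrow> x < c \<Longrightarrow> isCont v x"
    and v_pos: "\<And>x. c - d < x \<Longrightarrow> x < c \<Longrightarrow> 0 < v x"
    and v_le: "\<And>x. c - d < x \<Longrightarrow> x < c \<Longrightarrow> v x \<le> K * (c - x)"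
    and der: "\<And>t. 0 \<le> t \<Longrightarrow> (rho has_real_derivative v (rho t)) (at t within {0..})"
    and start: "c - d < rho 0" "rho 0 < c"
  shows "(rho \<longlongrightarrow> c) at_top"
proof -
  define u where "u t = c - rho t" for t
  define u' where "u' t = - v (rho t)" for t
  have der_u: "(u has_real_derivative u' t) (at t within {0..})" if "0 \<le> t" for t
    unfolding u_def u'_def using der[OF that] by (auto intro!: derivative_eq_intros)
  have bnd: "- K * u t \<le> u' t \<and> u' t \<le> 0" if "0 < u t" "u t < d" for t
    using v_pos[of "rho t"] v_le[of "rho t"] that by (simp add: u_def u'_def)
  have barrier: "0 < u t \<and> u t \<le> u 0" if "0 \<le> t" for t
    using start bnd that by (intro barrier_invariant_halfline[OF der_u]) (auto simp: u_def)
  have "(u \<longlongrightarrow> 0) at_top"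
  proof (rule tendsto_zero_if_uniformly_decreasing[OF der_u])
    fix t :: real assume "0 \<le> t"
    then show "0 < u t" and "u' t \<le> 0"
      using barrier[of t] bnd[of t] start by (auto simp: u_def)
  next
    fix \<epsilon> :: real assume "0 < \<epsilon>"
    define S where "S = {rho 0 .. c - \<epsilon>}"
    show "\<exists>m>0. \<forall>t\<ge>0. \<epsilon> \<le> u t \<longrightarrow> u' t \<le> - m"
    proof (cases "S = {}")
      case True
      then show ?thesis using barrier by (intro exI[of _ 1]) (force simp: S_def u_def)
    next
      case False
      have S_inside: "c - d < x \<and> x < c" if "x \<in> S" for x
        using that start \<open>0 < \<epsilon>\<close> by (auto simp: S_def)
      have "continuous_on S v"
        using S_inside cont by (intro continuous_at_imp_continuous_on) blast
      then obtain x0 where "x0 \<in> S" and x0_min: "\<And>x. x \<in> S \<Longrightarrow> v x0 \<le> v x"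
        using continuous_attains_inf[of S v] False by (auto simp: S_def)
      show ?thesis
      proof (intro exI[of _ "v x0"] conjI allI impI)
        show "0 < v x0" using S_inside[OF \<open>x0 \<in> S\<close>] v_pos by blast
        fix t :: real assume "0 \<le> t" "\<epsilon> \<le> u t"
        then have "rho t \<in> S" using barrier[of t] by (auto simp: S_def u_def)
        then show "u' t \<le> - v x0" using x0_min by (simp add: u'_def)
      qed
    qed
  qed
  then have "((\<lambda>t. c - u t) \<longlongrightarrow> c - 0) at_top"
    by (intro tendsto_intros)
  then show ?thesis by (simp add: u_def)
qed

lemma einterval_antiderivative_through:
  fixes a b :: ereal and h :: "real \<Rightarrow> real"
  assumes "a < x0" "x0 < b" and cont: "\<And>x :: real. a < x \<Longrightarrow> x < b \<Longrightarrow> isCont h x"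
  shows "\<exists>F. F x0 = y0 \<and> (\<forall>x :: real. a < x \<longrightarrow> x < b \<longrightarrow> (F has_real_derivative h x) (at x))"
proof -
  have "a < b" using assms by (metis less_trans)
  from einterval_antiderivative[OF this cont] obtain F
    where F: "\<And>x :: real. a < x \<Longrightarrow> x < b \<Longrightarrow> (F has_real_derivative h x) (at x)"
    by (auto simp: has_real_derivative_iff_has_vector_derivative)
  show ?thesis
    by (rule exI[of _ "\<lambda>x. F x - F x0 + y0"]) (auto intro!: derivative_eq_intros F)
qed

lemma exists_primitive_halfline:
  fixes h :: "real \<Rightarrow> real"
  assumes cont: "\<And>t. 0 \<le> t \<Longrightarrow> isCont h t"
  shows "\<exists>P. P 0 = p0 \<and> (\<forall>t\<ge>0. (P has_real_derivative h t) (at t))"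
proof -
  have "isCont (\<lambda>t. h (max t 0)) t" for t
    using cont[of "max t 0"] by (intro continuous_intros isCont_o2[where f = "\<lambda>t. max t 0"]) auto
  then obtain P where "P 0 = p0" and P: "\<And>t. (P has_real_derivative h (max t 0)) (at t)"
    using einterval_antiderivative_through[of "-\<infinity>" 0 "\<infinity>" "\<lambda>t. h (max t 0)" p0] by auto
  then show ?thesis using P by (intro exI[of _ P]) (metis max.absorb1)
qed

lemma inverse_of_unbounded_increasing:
  fixes F D :: "real \<Rightarrow> real"
  assumes der: "\<And>x. a < x \<Longrightarrow> x < b \<Longrightarrow> (F has_real_derivative D x) (at x)"
    and D_pos: "\<And>x. a < x \<Longrightarrow> x < b \<Longrightarrow> 0 < D x"
    and unbounded: "\<And>y. \<exists>x. a < x \<and> x < b \<and> y < F x"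
    and x0: "a < x0" "x0 < b"
  shows "\<exists>G. (\<forall>x. x0 < x \<longrightarrow> x < b \<longrightarrow> G (F x) = x) \<and>
           (\<forall>y. F x0 < y \<longrightarrow> x0 < G y \<and> G y < b \<and> F (G y) = y \<and>
              (G has_real_derivative inverse (D (G y))) (at y))"
proof -
  have mono: "F x < F z" if "a < x" "x < z" "z < b" for x z
    using der D_pos that
    by (intro DERIV_pos_imp_increasing[OF \<open>x < z\<close>]) (meson order.strict_trans1 order.strict_trans2)
  have cont: "isCont F x" if "a < x" "x < b" for x
    using der[OF that] by (rule DERIV_isCont)
  have inj: "inj_on F {x0<..<b}"
    using x0 by (intro strict_mono_on_imp_inj_on) (auto simp: strict_mono_on_def intro!: mono)
  define G where "G = the_inv_into {x0<..<b} F"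
  have G_F: "G (F x) = x" if "x0 < x" "x < b" for x
    unfolding G_def using inj that by (auto intro: the_inv_into_f_f)
  have onto: "y \<in> F ` {x0<..<b}" if y: "F x0 < y" for y
  proof -
    obtain x1 where x1: "a < x1" "x1 < b" "y < F x1" using unbounded by blast
    have "x0 < x1" using mono[of x1 x0] x0 x1 that by (cases x0 x1 rule: linorder_cases) auto
    have "continuous_on {x0..x1} F"
      using x0 x1 by (intro continuous_at_imp_continuous_on ballI cont) auto
    then obtain x where "x0 \<le> x" "x \<le> x1" "F x = y"
      using IVT'[of F x0 y x1] y x1 \<open>x0 < x1\<close> by auto
    moreover have "x \<noteq> x0" using \<open>F x = y\<close> y by auto
    ultimately show ?thesis using x1 by force
  qed
  have G_range: "x0 < G y \<and> G y < b \<and> F (G y) = y" if "F x0 < y" for y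
    using the_inv_into_into[OF inj onto[OF that], of "{x0<..<b}"] f_the_inv_into_f[OF inj onto[OF that]]
    by (simp add: G_def)
  have "(G has_real_derivative inverse (D (G y))) (at y)" if "F x0 < y" for y
  proof (rule DERIV_inverse_function[where f = F and a = "F x0" and b = "y + 1"])
    let ?x = "G y"
    have x: "x0 < ?x" "?x < b" "F ?x = y" using G_range[OF that] by auto
    show "(F has_real_derivative D ?x) (at ?x)" and "D ?x \<noteq> 0"
      using der[of ?x] D_pos[of ?x] x x0 by auto
    show "F (G z) = z" if "F x0 < z" "z < y + 1" for z
      using G_range that by blast
    have "isCont G (F ?x)"
      by (rule isCont_inverse_function2[where a = "(x0 + ?x) / 2" and b = "(?x + b) / 2"])
        (use x x0 in \<open>auto intro!: G_F cont\<close>)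
    then show "isCont G y" using x by simp
  qed (use that in auto)
  then show ?thesis using G_F G_range by blast
qed

lemma antiderivative_reciprocal_unbounded:
  fixes F v :: "real \<Rightarrow> real"
  assumes der: "\<And>x. r0 \<le> x \<Longrightarrow> x < c \<Longrightarrow> (F has_real_derivative 1 / v x) (at x)"
    and v_pos: "\<And>x. r0 \<le> x \<Longrightarrow> x < c \<Longrightarrow> 0 < v x"
    and v_le: "\<And>x. r0 \<le> x \<Longrightarrow> x < c \<Longrightarrow> v x \<le> K * (c - x)"
    and "r0 < c"
  shows "\<exists>x. r0 < x \<and> x < c \<and> y < F x"
proof -
  have "0 < K"
    using v_pos[of r0] v_le[of r0] \<open>r0 < c\<close> by (smt (verit) mult_nonpos_nonneg)
  \<comment> \<open>compare with the antiderivative \<open>- ln (c - x) / K\<close> of \<open>1 / (K * (c - x))\<close>\<close>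
  have log_bound: "F r0 + (ln (c - r0) - ln (c - x)) / K \<le> F x" if "r0 \<le> x" "x < c" for x
  proof -
    have "F r0 + ln (c - r0) / K \<le> F x + ln (c - x) / K"
    proof (rule DERIV_nonneg_imp_nondecreasing[OF \<open>r0 \<le> x\<close>])
      fix z assume z: "r0 \<le> z" "z \<le> x"
      then have "z < c" using that by simp
      have "((\<lambda>z. F z + ln (c - z) / K) has_real_derivative 1 / v z - 1 / (K * (c - z))) (at z)"
        using der[OF z(1) \<open>z < c\<close>] \<open>z < c\<close> \<open>0 < K\<close> by (auto intro!: derivative_eq_intros)
      moreover have "1 / (K * (c - z)) \<le> 1 / v z"
        using v_le[OF z(1) \<open>z < c\<close>] v_pos[OF z(1) \<open>z < c\<close>] by (intro divide_left_mono) auto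
      ultimately show "\<exists>D. ((\<lambda>z. F z + ln (c - z) / K) has_real_derivative D) (at z) \<and> 0 \<le> D"
        by force
    qed
    then show ?thesis by (simp add: diff_divide_distrib)
  qed
  define q where "q = exp (- (K * \<bar>y - F r0\<bar> + 1))"
  define x where "x = c - (c - r0) * q"
  have "0 \<le> K * \<bar>y - F r0\<bar>" using \<open>0 < K\<close> by simp
  then have "0 < q" "q < 1" by (auto simp: q_def)
  then have "0 < (c - r0) * q" "(c - r0) * q < (c - r0) * 1"
    using \<open>r0 < c\<close> by (intro mult_pos_pos mult_strict_left_mono; simp)+
  then have "r0 < x" "x < c" unfolding x_def by simp_all
  moreover have "ln (c - x) = ln (c - r0) - (K * \<bar>y - F r0\<bar> + 1)"
    using \<open>r0 < c\<close> by (simp add: x_def q_def ln_mult)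
  then have "F r0 + (ln (c - r0) - ln (c - x)) / K = F r0 + \<bar>y - F r0\<bar> + 1 / K"
    using \<open>0 < K\<close> by (simp add: field_simps)
  moreover have "y < F r0 + \<bar>y - F r0\<bar> + 1 / K"
    using \<open>0 < K\<close> by (smt (verit) divide_pos_pos)
  ultimately show ?thesis
    using log_bound[of x] by (intro exI[of _ x]) auto
qed

lemma exists_unbounded_antiderivative_reciprocal:
  fixes v :: "real \<Rightarrow> real"
  assumes cont: "\<And>x. c - d < x \<Longrightarrow> x < c \<Longrightarrow> isCont v x"
    and v_pos: "\<And>x. c - d < x \<Longrightarrow> x < c \<Longrightarrow> 0 < v x"
    and v_le: "\<And>x. c - d < x \<Longrightarrow> x < c \<Longrightarrow> v x \<le> K * (c - x)"
    and r0: "c - d < r0" "r0 < c"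
  shows "\<exists>F. F r0 = 0 \<and> (\<forall>x. c - d < x \<and> x < c \<longrightarrow> (F has_real_derivative 1 / v x) (at x)) \<and>
           (\<forall>y. \<exists>x. c - d < x \<and> x < c \<and> y < F x)"
proof -
  have "\<exists>F. F r0 = 0 \<and> (\<forall>x :: real. ereal (c - d) < x \<longrightarrow> x < ereal c \<longrightarrow>
          (F has_real_derivative 1 / v x) (at x))"
  proof (rule einterval_antiderivative_through)
    fix x :: real assume "ereal (c - d) < ereal x" "ereal x < ereal c"
    then show "isCont (\<lambda>x. 1 / v x) x"
      using cont[of x] v_pos[of x] by (intro continuous_intros) auto
  qed (use r0 in simp_all)
  then obtain F where "F r0 = 0"
    and F: "\<And>x. c - d < x \<Longrightarrow> x < c \<Longrightarrow> (F has_real_derivative 1 / v x) (at x)"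
    unfolding less_ereal.simps by blast
  have "\<exists>x. c - d < x \<and> x < c \<and> y < F x" for y
  proof -
    have "\<exists>x. r0 < x \<and> x < c \<and> y < F x"
      by (rule antiderivative_reciprocal_unbounded[of r0 c F v K]) (use F v_pos v_le r0 in auto)
    then show ?thesis using r0 by (meson less_trans)
  qed
  then show ?thesis using \<open>F r0 = 0\<close> F by blast
qed

lemma autonomous_ode_solution_exists:
  fixes v :: "real \<Rightarrow> real"
  assumes cont: "\<And>x. c - d < x \<Longrightarrow> x < c \<Longrightarrow> isCont v x"
    and v_pos: "\<And>x. c - d < x \<Longrightarrow> x < c \<Longrightarrow> 0 < v x"
    and v_le: "\<And>x. c - d < x \<Longrightarrow> x < c \<Longrightarrow> v x \<le> K * (c - x)"
    and r0: "c - d < r0" "r0 < c"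
  shows "\<exists>rho. rho 0 = r0 \<and>
           (\<forall>t\<ge>0. r0 \<le> rho t \<and> rho t < c \<and> (rho has_real_derivative v (rho t)) (at t))"
proof -
  \<comment> \<open>separation of variables: the solution is the inverse of an antiderivative of \<open>1 / v\<close>\<close>
  obtain F where "F r0 = 0"
    and F: "\<And>x. c - d < x \<Longrightarrow> x < c \<Longrightarrow> (F has_real_derivative 1 / v x) (at x)"
    and unbounded: "\<And>y. \<exists>x. c - d < x \<and> x < c \<and> y < F x"
    using exists_unbounded_antiderivative_reciprocal[OF cont v_pos v_le r0] by blast
  define x0 where "x0 = (c - d + r0) / 2"
  have x0: "c - d < x0" "x0 < r0" using r0 by (auto simp: x0_def)
  obtain G where G_F: "\<And>x. x0 < x \<Longrightarrow> x < c \<Longrightarrow> G (F x) = x"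
    and G: "\<And>y. F x0 < y \<Longrightarrow> x0 < G y \<and> G y < c \<and>
              (G has_real_derivative inverse (1 / v (G y))) (at y)"
    using inverse_of_unbounded_increasing[of "c - d" c F "\<lambda>x. 1 / v x", OF F _ unbounded x0(1)]
      v_pos x0 r0 by fastforce
  have "F x0 < F r0"
  proof (rule DERIV_pos_imp_increasing[OF \<open>x0 < r0\<close>])
    fix x assume "x0 \<le> x" "x \<le> r0"
    then have "c - d < x" "x < c" using x0 r0 by auto
    then show "\<exists>D. (F has_real_derivative D) (at x) \<and> 0 < D"
      using F v_pos by (intro exI[of _ "1 / v x"]) simp
  qed
  then have G_der: "(G has_real_derivative v (G t)) (at t)" and G_range: "x0 < G t \<and> G t < c"
    if "0 \<le> t" for t
    using G[of t] that \<open>F r0 = 0\<close> by auto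
  have "G 0 = r0" using G_F[of r0] x0 r0 \<open>F r0 = 0\<close> by simp
  moreover have "r0 \<le> G t" if "0 \<le> t" for t
  proof -
    have "G 0 \<le> G t"
    proof (rule DERIV_nonneg_imp_nondecreasing[OF that])
      fix s assume "0 \<le> s" "s \<le> t"
      then show "\<exists>D. (G has_real_derivative D) (at s) \<and> 0 \<le> D"
        using G_der[of s] G_range[of s] v_pos[of "G s"] x0 by (auto intro!: less_imp_le)
    qed
    then show ?thesis using \<open>G 0 = r0\<close> by simp
  qed
  ultimately show ?thesis using G_der G_range by (intro exI[of _ G]) auto
qed

lemma has_real_derivative_reflect:
  fixes f :: "real \<Rightarrow> real"
  assumes "(f has_real_derivative D) (at (- t) within S)"
  shows "((\<lambda>s. k - f (- s)) has_real_derivative D) (at t within uminus ` S)"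
proof -
  have "(uminus has_real_derivative - 1) (at t within uminus ` S)"
    by (auto intro!: derivative_eq_intros)
  from DERIV_image_chain[OF _ this, of f D] assms
  have "((\<lambda>s. f (- s)) has_real_derivative - D) (at t within uminus ` S)"
    by (simp add: image_image comp_def)
  then show ?thesis by (auto intro!: derivative_eq_intros)
qed

section \<open>The acoustic horizon\<close>

lemma smooth_on_imp_differentiable:
  assumes "smooth_on S f" "x \<in> S"
  shows "f differentiable (at x)"
  using assms unfolding smooth_on_def by (metis funpow_0)

lemma differentiable_at_imp_local_lipschitz:
  fixes f :: "real \<Rightarrow> real"
  assumes "f differentiable (at x)"
  shows "\<exists>e>0. \<exists>K. \<forall>y. \<bar>y - x\<bar> < e \<longrightarrow> \<bar>f y - f x\<bar> \<le> K * \<bar>y - x\<bar>"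
proof -
  obtain D where "(f has_real_derivative D) (at x)"
    using assms by (auto simp: real_differentiable_def)
  then have "\<forall>\<^sub>F h in at 0. dist ((f (x + h) - f x) / h) D < 1"
    unfolding DERIV_def by (rule tendstoD) simp
  then obtain e where "e > 0"
    and e: "\<And>h. h \<noteq> 0 \<Longrightarrow> \<bar>h\<bar> < e \<Longrightarrow> \<bar>(f (x + h) - f x) / h - D\<bar> < 1"
    unfolding eventually_at by (auto simp: dist_real_def)
  have "\<bar>f y - f x\<bar> \<le> (\<bar>D\<bar> + 1) * \<bar>y - x\<bar>" if "\<bar>y - x\<bar> < e" for y
  proof (cases "y = x")
    case False
    then have "\<bar>(f y - f x) / (y - x) - D\<bar> < 1"
      using e[of "y - x"] that by simp
    then have "\<bar>(f y - f x) / (y - x)\<bar> \<le> \<bar>D\<bar> + 1"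
      by linarith
    then show ?thesis using False by (simp add: abs_divide divide_le_eq)
  qed simp
  then show ?thesis using \<open>e > 0\<close> by blast
qed

lemma isCont_imp_pos_nbhd:
  fixes f :: "real \<Rightarrow> real"
  assumes "isCont f x" "0 < f x"
  shows "\<exists>e>0. \<forall>y. \<bar>y - x\<bar> < e \<longrightarrow> 0 < f y"
proof -
  from LIM_fun_gt_zero[OF assms[unfolded isCont_def]]
  obtain e where "e > 0" "\<And>y. y \<noteq> x \<and> \<bar>x - y\<bar> < e \<Longrightarrow> 0 < f y" by blast
  then show ?thesis using assms(2) by (metis abs_minus_commute)
qed

lemma vrho_rationalized:
  fixes a b s :: real
  assumes s2: "s\<^sup>2 = a\<^sup>2 + b\<^sup>2 - 1" and "a\<^sup>2 + b\<^sup>2 \<noteq> 0" "b - a * s \<noteq> 0"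
  shows "(a * (a\<^sup>2 + b\<^sup>2 - 1) + b * s) / (a\<^sup>2 + b\<^sup>2) = s * (1 - a\<^sup>2) / (b - a * s)"
proof -
  have "(a * s\<^sup>2 + b * s) * (b - a * s) = s * (b\<^sup>2 - a\<^sup>2 * s\<^sup>2)"
    by (simp add: algebra_simps power2_eq_square)
  also have "\<dots> = s * (1 - a\<^sup>2) * (a\<^sup>2 + b\<^sup>2)"
    unfolding s2 by (simp add: algebra_simps power2_eq_square)
  finally have "(a * s\<^sup>2 + b * s) * (b - a * s) = s * (1 - a\<^sup>2) * (a\<^sup>2 + b\<^sup>2)" .
  then show ?thesis
    unfolding s2[symmetric] using assms(2,3) by (simp add: frac_eq_eq)
qed

lemma vrho_plus_bounds:
  assumes a: "-1 \<le> A r" "A r < 0" and b: "0 < B r" and ergo: "1 < (A r)\<^sup>2 + (B r)\<^sup>2"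
  shows "vrho_plus A B r \<le> 2 * (1 + A r)" and "-1 < A r \<Longrightarrow> 0 < vrho_plus A B r"
proof -
  define s where "s = sfun A B r"
  have s2: "s\<^sup>2 = (A r)\<^sup>2 + (B r)\<^sup>2 - 1" and "0 < s"
    using ergo by (auto simp: s_def sfun_def)
  have "(A r)\<^sup>2 \<le> 1" using a by (simp add: abs_square_le_1)
  then have "s\<^sup>2 \<le> (B r)\<^sup>2" using s2 by linarith
  then have "s \<le> B r" by (rule power2_le_imp_le) (use b in simp)
  have "B r \<le> B r - A r * s" using a \<open>0 < s\<close> by (simp add: mult_nonpos_nonneg)
  have v: "vrho_plus A B r = s * (1 - (A r)\<^sup>2) / (B r - A r * s)"
    unfolding vrho_plus_def s_def[symmetric]
    by (rule vrho_rationalized[OF s2]) (use ergo b \<open>B r \<le> B r - A r * s\<close> in auto)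
  have "vrho_plus A B r \<le> s * (1 - (A r)\<^sup>2) / B r"
    unfolding v using \<open>(A r)\<^sup>2 \<le> 1\<close> b \<open>0 < s\<close> \<open>B r \<le> B r - A r * s\<close>
    by (intro divide_left_mono) auto
  also have "\<dots> \<le> 1 - (A r)\<^sup>2"
    using \<open>s \<le> B r\<close> \<open>(A r)\<^sup>2 \<le> 1\<close> b
    by (simp add: divide_le_eq mult.commute[of _ "B r"] mult_right_mono)
  also have "\<dots> = (1 - A r) * (1 + A r)"
    by (simp add: algebra_simps power2_eq_square)
  also have "\<dots> \<le> 2 * (1 + A r)"
    using a by (intro mult_right_mono) auto
  finally show "vrho_plus A B r \<le> 2 * (1 + A r)" .
  show "0 < vrho_plus A B r" if "-1 < A r"
  proof -
    have "0 < (1 - A r) * (1 + A r)" using that a by simp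
    then have "0 < 1 - (A r)\<^sup>2" by (simp add: algebra_simps power2_eq_square)
    then show ?thesis unfolding v using b \<open>0 < s\<close> \<open>B r \<le> B r - A r * s\<close> by simp
  qed
qed

lemma range_circle:
  fixes c \<omega> :: real
  assumes "0 < c" "\<omega> \<noteq> 0"
  shows "range (\<lambda>t. (c * cos (t * \<omega>), c * sin (t * \<omega>))) = {p. norm p = c}"
proof (intro set_eqI iffI)
  fix p :: "real \<times> real"
  assume "p \<in> range (\<lambda>t. (c * cos (t * \<omega>), c * sin (t * \<omega>)))"
  then obtain t where p: "p = (c * cos (t * \<omega>), c * sin (t * \<omega>))" by auto
  have "(c * cos (t * \<omega>))\<^sup>2 + (c * sin (t * \<omega>))\<^sup>2 = c\<^sup>2"
    by (simp add: power_mult_distrib flip: distrib_left)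
  then show "p \<in> {p. norm p = c}" using \<open>0 < c\<close> by (simp add: p norm_Pair)
next
  fix p :: "real \<times> real"
  assume "p \<in> {p. norm p = c}"
  then have "sqrt ((fst p)\<^sup>2 + (snd p)\<^sup>2) = c"
    by (cases p) (simp add: norm_Pair)
  then have "(fst p)\<^sup>2 + (snd p)\<^sup>2 = c\<^sup>2"
    by (metis real_sqrt_pow2 add_nonneg_nonneg zero_le_power2)
  then have "(fst p / c)\<^sup>2 + (snd p / c)\<^sup>2 = 1"
    using \<open>0 < c\<close> by (simp add: power_divide field_simps)
  then obtain \<theta> where "fst p / c = cos \<theta>" "snd p / c = sin \<theta>"
    using sincos_total_2pi by metis
  then have "p = (c * cos (\<theta> / \<omega> * \<omega>), c * sin (\<theta> / \<omega> * \<omega>))"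
    using assms by (simp add: divide_eq_eq prod_eq_iff)
  then show "p \<in> range (\<lambda>t. (c * cos (t * \<omega>), c * sin (t * \<omega>)))" by blast
qed

locale acoustic_double_root =
  fixes A B :: "real \<Rightarrow> real" and rm rp r1 :: real
  assumes smoothA: "smooth_on {0<..} A" and smoothB: "smooth_on {0<..} B"
    and rm_nonneg: "0 \<le> rm" and r1_in: "rm < r1" "r1 < rp"
    and ergo: "\<forall>r. rm < r \<and> r < rp \<longrightarrow> (A r)\<^sup>2 + (B r)\<^sup>2 > 1"
    and A_neg: "\<exists>e>0. \<forall>r. \<bar>r - r1\<bar> < e \<longrightarrow> A r < 0"
    and B_pos: "B r1 > 0"
    and double_root: "\<exists>C :: real \<Rightarrow> real. \<exists>e>0. \<forall>r. \<bar>r - r1\<bar> < e \<longrightarrow>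
                        A r + 1 = C r * (r - r1)\<^sup>2 \<and> C r > 0"
begin

lemma r1_pos: "0 < r1"
  using rm_nonneg r1_in by simp

lemma A_r1: "A r1 = -1"
proof -
  obtain C e where "e > 0" and "\<And>r. \<bar>r - r1\<bar> < e \<Longrightarrow> A r + 1 = C r * (r - r1)\<^sup>2"
    using double_root by blast
  from this(2)[of r1] \<open>e > 0\<close> show ?thesis by simp
qed

lemma isCont_A: "0 < r \<Longrightarrow> isCont A r" and isCont_B: "0 < r \<Longrightarrow> isCont B r"
  using smooth_on_imp_differentiable[OF smoothA] smooth_on_imp_differentiable[OF smoothB]
  by (auto intro: differentiable_imp_continuous_within)

lemma isCont_vrho_vphi_plus:
  assumes "rm < r" "r < rp"
  shows "isCont (vrho_plus A B) r" and "isCont (vphi_plus A B) r"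
proof -
  have "0 < r" using assms rm_nonneg by simp
  moreover have "(A r)\<^sup>2 + (B r)\<^sup>2 \<noteq> 0" using ergo assms by force
  ultimately show "isCont (vrho_plus A B) r" "isCont (vphi_plus A B) r"
    unfolding vrho_plus_def[abs_def] vphi_plus_def[abs_def] sfun_def[abs_def]
    using isCont_A isCont_B by (auto intro!: continuous_intros)
qed

lemma sfun_r1: "sfun A B r1 = B r1"
  using A_r1 B_pos by (simp add: sfun_def)

lemma vrho_plus_r1: "vrho_plus A B r1 = 0"
  by (simp add: vrho_plus_def sfun_r1 A_r1 power2_eq_square)

lemma vphi_plus_r1: "vphi_plus A B r1 = B r1 / r1"
proof -
  have "vphi_plus A B r1 = B r1 * (1 + (B r1)\<^sup>2) / (r1 * (1 + (B r1)\<^sup>2))"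
    by (simp add: vphi_plus_def sfun_r1 A_r1 power2_eq_square algebra_simps)
  also have "\<dots> = B r1 / r1"
    by (rule mult_divide_mult_cancel_right) (smt (verit) zero_le_power2)
  finally show ?thesis .
qed

lemma horizon_trajectory: "plus_trajectory A B rm rp UNIV (\<lambda>t. r1) (\<lambda>t. t * (B r1 / r1))"
  unfolding plus_trajectory_def using r1_in r1_pos
  by (auto intro!: derivative_eq_intros simp: vrho_plus_r1 vphi_plus_r1)

lemma horizon: "horizon_plus A B rm rp r1"
  unfolding horizon_plus_def
  using r1_in horizon_trajectory range_circle[OF r1_pos, of "B r1 / r1"] r1_pos B_pos by auto

lemma vrho_plus_near_r1:
  "\<exists>d>0. \<exists>K. (\<forall>r. \<bar>r - r1\<bar> < d \<longrightarrow> rm < r \<and> r < rp) \<and>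
     (\<forall>r. 0 < \<bar>r - r1\<bar> \<and> \<bar>r - r1\<bar> < d \<longrightarrow> 0 < vrho_plus A B r \<and> vrho_plus A B r \<le> K * \<bar>r - r1\<bar>)"
proof -
  obtain C e1 where "e1 > 0"
    and root: "\<And>r. \<bar>r - r1\<bar> < e1 \<Longrightarrow> A r + 1 = C r * (r - r1)\<^sup>2 \<and> C r > 0"
    using double_root by blast
  obtain e2 where "e2 > 0" and A_neg': "\<And>r. \<bar>r - r1\<bar> < e2 \<Longrightarrow> A r < 0"
    using A_neg by blast
  obtain e3 where "e3 > 0" and B_pos': "\<And>r. \<bar>r - r1\<bar> < e3 \<Longrightarrow> 0 < B r"
    using isCont_imp_pos_nbhd[OF isCont_B[OF r1_pos] B_pos] by blast
  obtain e4 L where "e4 > 0" and A_lip: "\<And>r. \<bar>r - r1\<bar> < e4 \<Longrightarrow> \<bar>A r - A r1\<bar> \<le> L * \<bar>r - r1\<bar>"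
    using differentiable_at_imp_local_lipschitz[OF smooth_on_imp_differentiable[OF smoothA]] r1_pos
    by force
  define d where "d = min (min e1 e2) (min (min e3 e4) (min (r1 - rm) (rp - r1)))"
  have "0 < d" using \<open>e1 > 0\<close> \<open>e2 > 0\<close> \<open>e3 > 0\<close> \<open>e4 > 0\<close> r1_in by (simp add: d_def)
  have d_le: "d \<le> e1" "d \<le> e2" "d \<le> e3" "d \<le> e4" "d \<le> r1 - rm" "d \<le> rp - r1"
    by (simp_all add: d_def)
  have in_ergo: "rm < r \<and> r < rp" if "\<bar>r - r1\<bar> < d" for r
    using that d_le by (auto simp: abs_less_iff)
  have "0 < vrho_plus A B r \<and> vrho_plus A B r \<le> 2 * L * \<bar>r - r1\<bar>"
    if "0 < \<bar>r - r1\<bar>" "\<bar>r - r1\<bar> < d" for r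
  proof -
    have "A r + 1 = C r * (r - r1)\<^sup>2" and "0 < C r * (r - r1)\<^sup>2"
      using root[of r] that d_le by simp_all
    then have "-1 < A r" by linarith
    moreover have "A r < 0" "0 < B r" "1 < (A r)\<^sup>2 + (B r)\<^sup>2"
      using A_neg' B_pos' ergo in_ergo that d_le by auto
    moreover have "2 * (1 + A r) \<le> 2 * L * \<bar>r - r1\<bar>"
      using A_lip[of r] A_r1 that d_le by simp
    ultimately show ?thesis
      using vrho_plus_bounds[of A r B] by force
  qed
  then show ?thesis using \<open>0 < d\<close> in_ergo by blast
qed

end

locale acoustic_horizon_nbhd = acoustic_double_root +
  fixes d K :: real
  assumes nbhd_in_ergoregion: "\<And>r. \<bar>r - r1\<bar> < d \<Longrightarrow> rm < r \<and> r < rp"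
    and vrho_plus_nbhd: "\<And>r. 0 < \<bar>r - r1\<bar> \<Longrightarrow> \<bar>r - r1\<bar> < d \<Longrightarrow>
           0 < vrho_plus A B r \<and> vrho_plus A B r \<le> K * \<bar>r - r1\<bar>"
begin

lemma vrho_plus_below:
  assumes "r1 - d < x" "x < r1"
  shows "isCont (vrho_plus A B) x" "0 < vrho_plus A B x" "vrho_plus A B x \<le> K * (r1 - x)"
  using isCont_vrho_vphi_plus(1) nbhd_in_ergoregion[of x] vrho_plus_nbhd[of x] assms by auto

lemma vrho_plus_above_reflected:
  assumes "r1 - d < x" "x < r1"
  shows "isCont (\<lambda>x. vrho_plus A B (2 * r1 - x)) x" "0 < vrho_plus A B (2 * r1 - x)"
    "vrho_plus A B (2 * r1 - x) \<le> K * (r1 - x)"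
proof -
  have "\<bar>(2 * r1 - x) - r1\<bar> = r1 - x" using assms by simp
  then show "0 < vrho_plus A B (2 * r1 - x)" "vrho_plus A B (2 * r1 - x) \<le> K * (r1 - x)"
    using vrho_plus_nbhd[of "2 * r1 - x"] assms by auto
  have "isCont (vrho_plus A B) (2 * r1 - x)"
    using isCont_vrho_vphi_plus(1) nbhd_in_ergoregion[of "2 * r1 - x"] assms by auto
  then show "isCont (\<lambda>x. vrho_plus A B (2 * r1 - x)) x"
    by (rule isCont_o2[rotated]) (intro continuous_intros)
qed

lemma forward_trajectory_exists:
  assumes "r1 - d < r0" "r0 < r1"
  shows "\<exists>rho phi. plus_trajectory A B rm rp {0..} rho phi \<and> rho 0 = r0 \<and> phi 0 = phi0"
proof -
  obtain rho where "rho 0 = r0" and rho: "\<And>t. 0 \<le> t \<Longrightarrow> r0 \<le> rho t \<and> rho t < r1 \<and>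
      (rho has_real_derivative vrho_plus A B (rho t)) (at t)"
    using autonomous_ode_solution_exists[OF vrho_plus_below assms] by blast
  have in_ergo: "rm < rho t \<and> rho t < rp" if "0 \<le> t" for t
    using rho[OF that] assms nbhd_in_ergoregion[of "rho t"] by auto
  have "isCont (\<lambda>t. vphi_plus A B (rho t)) t" if "0 \<le> t" for t
    using isCont_o2[OF DERIV_isCont isCont_vrho_vphi_plus(2)] rho[OF that] in_ergo[OF that] by blast
  then obtain phi where "phi 0 = phi0"
    and phi: "\<And>t. 0 \<le> t \<Longrightarrow> (phi has_real_derivative vphi_plus A B (rho t)) (at t)"
    using exists_primitive_halfline by blast
  have "plus_trajectory A B rm rp {0..} rho phi"
    unfolding plus_trajectory_def using in_ergo rho phi by (auto intro: has_field_derivative_at_within)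
  then show ?thesis using \<open>rho 0 = r0\<close> \<open>phi 0 = phi0\<close> by blast
qed

lemma forward_trajectory_tendsto:
  assumes "plus_trajectory A B rm rp {0..} rho phi" "r1 - d < rho 0" "rho 0 < r1"
  shows "(rho \<longlongrightarrow> r1) at_top"
  using assms vrho_plus_below
  by (intro autonomous_ode_tendsto_equilibrium[of r1 d "vrho_plus A B" K rho])
    (auto simp: plus_trajectory_def)

lemma backward_trajectory_exists:
  assumes "r1 < r0" "r0 < r1 + d"
  shows "\<exists>rho phi. plus_trajectory A B rm rp {..0} rho phi \<and> rho 0 = r0 \<and> phi 0 = phi0"
proof -
  have "r1 - d < 2 * r1 - r0" "2 * r1 - r0 < r1" using assms by auto
  from autonomous_ode_solution_exists[OF vrho_plus_above_reflected this]
  obtain sigma where "sigma 0 = 2 * r1 - r0" and sigma: "\<And>s. 0 \<le> s \<Longrightarrow>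
      2 * r1 - r0 \<le> sigma s \<and> sigma s < r1 \<and>
      (sigma has_real_derivative vrho_plus A B (2 * r1 - sigma s)) (at s)"
    by blast
  define rho where "rho t = 2 * r1 - sigma (- t)" for t
  have in_ergo: "rm < 2 * r1 - sigma s \<and> 2 * r1 - sigma s < rp" if "0 \<le> s" for s
    using sigma[OF that] assms nbhd_in_ergoregion[of "2 * r1 - sigma s"] by auto
  have "isCont (\<lambda>s. vphi_plus A B (2 * r1 - sigma s)) s" if "0 \<le> s" for s
  proof -
    have "isCont (\<lambda>s. 2 * r1 - sigma s) s"
      using DERIV_isCont[of sigma] sigma[OF that] by (intro continuous_intros) auto
    then show ?thesis
      using isCont_o2[where f = "\<lambda>s. 2 * r1 - sigma s" and g = "vphi_plus A B"]
        isCont_vrho_vphi_plus(2) in_ergo[OF that]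
      by auto
  qed
  then obtain psi where "psi 0 = - phi0"
    and psi: "\<And>s. 0 \<le> s \<Longrightarrow> (psi has_real_derivative vphi_plus A B (2 * r1 - sigma s)) (at s)"
    using exists_primitive_halfline by blast
  define phi where "phi t = 0 - psi (- t)" for t
  have "plus_trajectory A B rm rp {..0} rho phi"
    unfolding plus_trajectory_def
  proof (intro ballI conjI)
    fix t :: real assume "t \<in> {..0}"
    then have "0 \<le> - t" by simp
    show "rm < rho t" "rho t < rp" using in_ergo[OF \<open>0 \<le> - t\<close>] by (simp_all add: rho_def)
    show "(rho has_real_derivative vrho_plus A B (rho t)) (at t within {..0})"
      using has_real_derivative_reflect[of sigma _ t UNIV "2 * r1"] sigma[OF \<open>0 \<le> - t\<close>]
      unfolding rho_def[abs_def] by (auto intro: has_field_derivative_at_within)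
    show "(phi has_real_derivative vphi_plus A B (rho t)) (at t within {..0})"
      using has_real_derivative_reflect[of psi _ t UNIV 0] psi[OF \<open>0 \<le> - t\<close>]
      unfolding phi_def[abs_def] rho_def by (auto intro: has_field_derivative_at_within)
  qed
  moreover have "rho 0 = r0" "phi 0 = phi0"
    using \<open>sigma 0 = 2 * r1 - r0\<close> \<open>psi 0 = - phi0\<close> by (simp_all add: rho_def phi_def)
  ultimately show ?thesis by blast
qed

lemma backward_trajectory_tendsto:
  assumes traj: "plus_trajectory A B rm rp {..0} rho phi" and "r1 < rho 0" "rho 0 < r1 + d"
  shows "(rho \<longlongrightarrow> r1) at_bot"
proof -
  define sigma where "sigma s = 2 * r1 - rho (- s)" for s
  have "(sigma has_real_derivative vrho_plus A B (2 * r1 - sigma s)) (at s within {0..})"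
    if "0 \<le> s" for s
    using has_real_derivative_reflect[of rho _ s "{..0}" "2 * r1"] traj that
    by (auto simp: plus_trajectory_def sigma_def[abs_def] image_uminus_atMost)
  then have "(sigma \<longlongrightarrow> r1) at_top"
    using assms vrho_plus_above_reflected
    by (intro autonomous_ode_tendsto_equilibrium[of r1 d "\<lambda>x. vrho_plus A B (2 * r1 - x)" K sigma])
      (auto simp: sigma_def)
  then have "((\<lambda>s. 2 * r1 - sigma s) \<longlongrightarrow> 2 * r1 - r1) at_top"
    by (intro tendsto_intros)
  then show ?thesis
    by (simp add: filterlim_at_bot_mirror sigma_def)
qed

end

theorem mainTheorem5:
  fixes A B :: "real \<Rightarrow> real" and rm rp r1 :: real
  assumes smoothA: "smooth_on {0<..} A" and smoothB: "smooth_on {0<..} B"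
    and rm_nonneg: "0 \<le> rm" and r1_in: "rm < r1" "r1 < rp"
    and ergo: "\<forall>r. rm < r \<and> r < rp \<longrightarrow> (A r)\<^sup>2 + (B r)\<^sup>2 > 1"
    and A_neg: "\<exists>e>0. \<forall>r. \<bar>r - r1\<bar> < e \<longrightarrow> A r < 0"
    and B_pos: "B r1 > 0"
    and double_root: "\<exists>C :: real \<Rightarrow> real. \<exists>e>0. \<forall>r. \<bar>r - r1\<bar> < e \<longrightarrow>
                        A r + 1 = C r * (r - r1)\<^sup>2 \<and> C r > 0"
  shows "horizon_plus A B rm rp r1
       \<and> plus_trajectory A B rm rp UNIV (\<lambda>t. r1) (\<lambda>t. t * (B r1 / r1))
       \<and> vphi_plus A B r1 = B r1 / r1 \<and> B r1 / r1 \<noteq> 0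
       \<and> (\<exists>d>0. \<forall>r. 0 < \<bar>r - r1\<bar> \<and> \<bar>r - r1\<bar> < d \<longrightarrow> vrho_plus A B r > 0)
       \<and> (\<exists>d>0.
            (\<forall>r0 phi0. r1 - d < r0 \<and> r0 < r1 \<longrightarrow>
               (\<exists>rho phi. plus_trajectory A B rm rp {0..} rho phi \<and> rho 0 = r0 \<and> phi 0 = phi0))
          \<and> (\<forall>rho phi. plus_trajectory A B rm rp {0..} rho phi \<and> r1 - d < rho 0 \<and> rho 0 < r1 \<longrightarrow>
               (rho \<longlongrightarrow> r1) at_top)
          \<and> (\<forall>r0 phi0. r1 < r0 \<and> r0 < r1 + d \<longrightarrow>
               (\<exists>rho phi. plus_trajectory A B rm rp {..0} rho phi \<and> rho 0 = r0 \<and> phi 0 = phi0))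
          \<and> (\<forall>rho phi. plus_trajectory A B rm rp {..0} rho phi \<and> r1 < rho 0 \<and> rho 0 < r1 + d \<longrightarrow>
               (rho \<longlongrightarrow> r1) at_bot))"
proof -
  interpret acoustic_double_root A B rm rp r1
    using assms by unfold_locales auto
  obtain d K where "0 < d" and nbhd: "\<forall>r. \<bar>r - r1\<bar> < d \<longrightarrow> rm < r \<and> r < rp"
    and bounds: "\<forall>r. 0 < \<bar>r - r1\<bar> \<and> \<bar>r - r1\<bar> < d \<longrightarrow>
                   0 < vrho_plus A B r \<and> vrho_plus A B r \<le> K * \<bar>r - r1\<bar>"
    using vrho_plus_near_r1 by blast
  interpret acoustic_horizon_nbhd A B rm rp r1 d K
    using nbhd bounds by unfold_locales auto
  have "B r1 / r1 \<noteq> 0" using B_pos r1_pos by simp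
  then show ?thesis
    using horizon horizon_trajectory vphi_plus_r1 \<open>0 < d\<close> bounds
      forward_trajectory_exists forward_trajectory_tendsto
      backward_trajectory_exists backward_trajectory_tendsto
    by blast
qed

end
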